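(* There is an infinite family of instances (temporal graphs $\mathcal G_n$ with parameters $T_{\max},\delta$) such that the witness complexity under the infection-times-only variation grows in $\Omega(|E(\mathcal G_n)|)$, with the implied constant independent of $k$.
   Context: A temporal graph $\mathcal G=(V,E,\lambda)$ with lifetime $T_{\max}$ consists of a finite undirected static graph $(V,E)$ and a labeling $\lambda:E\to\{1,\dots,T_{\max}\}$; edge $e$ is present only at time $\lambda(e)$. Infection model with parameter $\delta$: a set $S\subseteq V\times[0,T_{\max}]$ of at most $k$ seed infections; a seed $(u,t)$ makes $u$ infected at time $t$; otherwise a susceptible node $u$ becomes infected at time $t$ iff some neighbour $v$ infectious at time $t$ has $\lambda(uv)=t$. A node infected at time $t$ is infectious at times $t+1,\dots,t+\delta$ and resistant afterwards. The infection timetable of a round is the set of pairs $(v,t)$ with $v$ infected at time $t$. Under the infection-times-only variation, a witnessing schedule of length $a$ is a sequence $S_1,\dots,S_a$ of seed sets of size at most $k$ such that all labels of $\mathcal G$ are uniquely determined (among labelings of the known static graph) by the infection timetables of these rounds; the witness complexity is the length of a shortest witnessing schedule. *)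

theory Defs
  imports Complex_Main
begin

definition temporal_graph :: "'v set \<Rightarrow> 'v set set \<Rightarrow> nat \<Rightarrow> ('v set \<Rightarrow> nat) \<Rightarrow> bool" where
  "temporal_graph V E Tmax lam \<longleftrightarrow>
     finite V \<and> (\<forall>e\<in>E. \<exists>u v. e = {u, v} \<and> u \<noteq> v \<and> u \<in> V \<and> v \<in> V) \<and>
     (\<forall>e\<in>E. lam e \<in> {1..Tmax})"

definition labeling :: "'v set set \<Rightarrow> nat \<Rightarrow> ('v set \<Rightarrow> nat) \<Rightarrow> bool" where
  "labeling E Tmax lam \<longleftrightarrow> (\<forall>e\<in>E. lam e \<in> {1..Tmax})"

text \<open>Infection pairs (v,t) with infection time t at most the given bound.
  A node infected at time s is infectious at times s+1..s+delta; a node is infected at most once.\<close>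

primrec infected_upto ::
  "'v set set \<Rightarrow> ('v set \<Rightarrow> nat) \<Rightarrow> nat \<Rightarrow> ('v \<times> nat) set \<Rightarrow> nat \<Rightarrow> ('v \<times> nat) set" where
  "infected_upto E lam \<delta> S 0 = {(u, s). (u, s) \<in> S \<and> s = 0}"
| "infected_upto E lam \<delta> S (Suc t) = infected_upto E lam \<delta> S t \<union>
     {(u, Suc t) | u. u \<notin> fst ` infected_upto E lam \<delta> S t \<and>
        ((u, Suc t) \<in> S \<or>
         (\<exists>v s. (v, s) \<in> infected_upto E lam \<delta> S t \<and> s < Suc t \<and> Suc t \<le> s + \<delta> \<and>
                {u, v} \<in> E \<and> lam {u, v} = Suc t))}"

definition timetable ::
  "'v set set \<Rightarrow> ('v set \<Rightarrow> nat) \<Rightarrow> nat \<Rightarrow> nat \<Rightarrow> ('v \<times> nat) set \<Rightarrow> ('v \<times> nat) set" where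
  "timetable E lam \<delta> Tmax S = infected_upto E lam \<delta> S Tmax"

definition valid_seeds :: "'v set \<Rightarrow> nat \<Rightarrow> nat \<Rightarrow> ('v \<times> nat) set \<Rightarrow> bool" where
  "valid_seeds V Tmax k S \<longleftrightarrow> S \<subseteq> V \<times> {0..Tmax} \<and> finite S \<and> card S \<le> k"

definition witnessing_schedule ::
  "'v set \<Rightarrow> 'v set set \<Rightarrow> nat \<Rightarrow> nat \<Rightarrow> nat \<Rightarrow> ('v set \<Rightarrow> nat) \<Rightarrow> ('v \<times> nat) set list \<Rightarrow> bool" where
  "witnessing_schedule V E Tmax \<delta> k lam Ss \<longleftrightarrow>
     (\<forall>S\<in>set Ss. valid_seeds V Tmax k S) \<and>
     (\<forall>lam'. labeling E Tmax lam' \<longrightarrow>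
        (\<forall>S\<in>set Ss. timetable E lam' \<delta> Tmax S = timetable E lam \<delta> Tmax S) \<longrightarrow>
        (\<forall>e\<in>E. lam' e = lam e))"

definition witness_complexity ::
  "'v set \<Rightarrow> 'v set set \<Rightarrow> nat \<Rightarrow> nat \<Rightarrow> nat \<Rightarrow> ('v set \<Rightarrow> nat) \<Rightarrow> nat" where
  "witness_complexity V E Tmax \<delta> k lam =
     (LEAST a. \<exists>Ss. length Ss = a \<and> witnessing_schedule V E Tmax \<delta> k lam Ss)"

end

theory Submission
  imports Defs
begin

(* On the star with centre 0 and leaves 1, ..., m, where the edge {0, j} carries the label
   j = Max {0, j}, and with delta = 1, moving the label of {0, j} to v leaves the timetable of a
   round unchanged unless v - 1 is the infection time of 0 or of j, or {0, j} is the edge that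
   infects one of its endpoints. Since every node is infected at most once, a round therefore
   detects at most 4m of the m(m - 1) single-label changes, and a witnessing schedule has to
   detect all of them: it has at least (m - 1)/4 rounds, whatever k is. Seeding the centre at
   the times 0, ..., m - 1 gives a witnessing schedule, so the witness complexity is attained. *)

lemma infected_upto_mono: "t \<le> t' \<Longrightarrow> infected_upto E lam \<delta> S t \<subseteq> infected_upto E lam \<delta> S t'"
  by (induction t' rule: dec_induct) auto

lemma infected_upto_time_le: "(u, s) \<in> infected_upto E lam \<delta> S t \<Longrightarrow> s \<le> t"
  by (induction t arbitrary: u s) (auto intro: le_SucI)

lemma infected_upto_time_unique:
  "(u, s) \<in> infected_upto E lam \<delta> S t \<Longrightarrow> (u, s') \<in> infected_upto E lam \<delta> S t \<Longrightarrow> s = s'"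
proof (induction t arbitrary: s s')
  case (Suc t)
  then show ?case using infected_upto_time_le[of u _ E lam \<delta> S t] by (auto simp: image_iff)
qed auto

lemma infected_upto_cause:
  "(u, s) \<in> infected_upto E lam \<delta> S t \<Longrightarrow> (u, s) \<in> S \<or> (\<exists>w. {u, w} \<in> E \<and> lam {u, w} = s)"
  by (induction t arbitrary: u s) auto

lemma infected_upto_singleton_seed_before: "t < r \<Longrightarrow> infected_upto E lam \<delta> {(x, r)} t = {}"
  by (induction t) auto

lemma infected_upto_singleton_seed_at: "infected_upto E lam \<delta> {(x, r)} r = {(x, r)}"
proof (cases r)
  case (Suc t)
  then show ?thesis
    using infected_upto_singleton_seed_before[of t r E lam \<delta> x] by simp
qed simp

definition infectious_at :: "('v \<times> nat) set \<Rightarrow> nat \<Rightarrow> 'v \<Rightarrow> nat \<Rightarrow> bool" where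
  "infectious_at I \<delta> x t \<longleftrightarrow> (\<exists>s. (x, s) \<in> I \<and> s < t \<and> t \<le> s + \<delta>)"

lemma infectious_at_one_iff: "infectious_at I 1 x t \<longleftrightarrow> (\<exists>s. (x, s) \<in> I \<and> t = Suc s)"
  unfolding infectious_at_def by auto

lemma infected_upto_relabel_edge:
  assumes not_infectious: "\<forall>x\<in>e. \<not> infectious_at (infected_upto E lam \<delta> S T) \<delta> x v"
    and not_transmitting: "\<forall>x y. e = {x, y} \<longrightarrow> (y, lam e) \<in> infected_upto E lam \<delta> S T \<longrightarrow>
                             \<not> infectious_at (infected_upto E lam \<delta> S T) \<delta> x (lam e)"
    and "t \<le> T"
  shows "infected_upto E (lam(e := v)) \<delta> S t = infected_upto E lam \<delta> S t"
  using \<open>t \<le> T\<close>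
proof (induction t)
  case (Suc t)
  let ?I = "infected_upto E lam \<delta> S"
  have IH: "infected_upto E (lam(e := v)) \<delta> S t = ?I t"
    using Suc.IH Suc.prems Suc_leD by blast
  have in_final: "?I t \<subseteq> ?I T" "?I (Suc t) \<subseteq> ?I T"
    using Suc.prems Suc_leD infected_upto_mono by blast+
  have same_label: "(lam(e := v)) {u, w} = Suc t \<longleftrightarrow> lam {u, w} = Suc t"
    if u: "u \<notin> fst ` ?I t" and w: "(w, s) \<in> ?I t" "s < Suc t" "Suc t \<le> s + \<delta>" and uw: "{u, w} \<in> E"
    for u w s
  proof (cases "{u, w} = e")
    case True
    have "(w, s) \<in> ?I T"
      using w(1) in_final(1) by blast
    then have w_infectious: "infectious_at (?I T) \<delta> w (Suc t)"
      using w unfolding infectious_at_def by blast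
    then have "v \<noteq> Suc t"
      using not_infectious True by auto
    moreover have "lam e \<noteq> Suc t"
    proof
      assume lam_e: "lam e = Suc t"
      then have "(u, lam e) \<in> ?I (Suc t)"
        using u w uw True by auto
      then have "(u, lam e) \<in> ?I T"
        using in_final(2) by blast
      then show False
        using not_transmitting w_infectious True lam_e by (metis insert_commute)
    qed
    ultimately show ?thesis
      using True by simp
  qed simp
  show ?case
    by (simp only: infected_upto.simps IH) (use same_label in blast)
qed simp

lemma witness_complexity_attained:
  assumes "witnessing_schedule V E T \<delta> k lam Ss"
  obtains Ss' where "length Ss' = witness_complexity V E T \<delta> k lam"
    and "witnessing_schedule V E T \<delta> k lam Ss'"
proof -
  have "\<exists>a Ss. length Ss = a \<and> witnessing_schedule V E T \<delta> k lam Ss"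
    using assms by blast
  from LeastI_ex[OF this] show thesis
    using that unfolding witness_complexity_def by blast
qed

definition star_edges :: "nat \<Rightarrow> nat set set" where
  "star_edges m = (\<lambda>j. {0, j}) ` {1..m}"

lemma card_star_edges: "card (star_edges m) = m"
  unfolding star_edges_def by (subst card_image) (auto simp: inj_on_def doubleton_eq_iff)

lemma temporal_graph_star: "temporal_graph {0..m} (star_edges m) m Max"
  unfolding temporal_graph_def star_edges_def by force

definition detected_relabelings :: "nat \<Rightarrow> (nat \<times> nat) set \<Rightarrow> (nat \<times> nat) set" where
  "detected_relabelings m S = {(j, v) \<in> {1..m} \<times> {1..m}.
     timetable (star_edges m) (Max({0, j} := v)) 1 m S \<noteq> timetable (star_edges m) Max 1 m S}"

lemma detected_relabelings_subset:
  assumes infection_time: "\<And>x t. (x, t) \<in> timetable (star_edges m) Max 1 m S \<Longrightarrow> t = \<tau> x"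
  shows "detected_relabelings m S \<subseteq>
    (\<lambda>j. (j, Suc (\<tau> j))) ` {1..m} \<union> (\<lambda>j. (j, Suc (\<tau> 0))) ` {1..m} \<union> {\<tau> 0, Suc (\<tau> 0)} \<times> {1..m}"
proof
  fix p assume "p \<in> detected_relabelings m S"
  then obtain j v where p: "p = (j, v)" and j: "j \<in> {1..m}" and v: "v \<in> {1..m}"
    and changed: "timetable (star_edges m) (Max({0, j} := v)) 1 m S \<noteq> timetable (star_edges m) Max 1 m S"
    unfolding detected_relabelings_def by blast
  let ?I = "timetable (star_edges m) Max 1 m S"
  have "Max {0, j} = j" by simp
  then have "\<not> ((\<forall>x\<in>{0, j}. \<not> infectious_at ?I 1 x v) \<and>
      (\<forall>x y. {0, j} = {x, y} \<longrightarrow> (y, j) \<in> ?I \<longrightarrow> \<not> infectious_at ?I 1 x j))"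
    using infected_upto_relabel_edge[of "{0, j}" "star_edges m" Max 1 S m v m, unfolded \<open>Max {0, j} = j\<close>]
      changed
    unfolding timetable_def by blast
  then consider (centre) "infectious_at ?I 1 0 v" | (leaf) "infectious_at ?I 1 j v"
    | (transmits) x y where "{0, j} = {x, y}" "(y, j) \<in> ?I" "infectious_at ?I 1 x j"
    by blast
  then have "v = Suc (\<tau> j) \<or> v = Suc (\<tau> 0) \<or> j = Suc (\<tau> 0) \<or> j = \<tau> 0"
  proof cases
    case centre
    then obtain s where "(0, s) \<in> ?I" "v = Suc s" unfolding infectious_at_one_iff by blast
    then show ?thesis using infection_time by blast
  next
    case leaf
    then obtain s where "(j, s) \<in> ?I" "v = Suc s" unfolding infectious_at_one_iff by blast
    then show ?thesis using infection_time by blast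
  next
    case transmits
    then consider "x = 0" "y = j" | "x = j" "y = 0" by (auto simp: doubleton_eq_iff)
    then show ?thesis
    proof cases
      case 1
      then obtain s where "(0, s) \<in> ?I" "j = Suc s"
        using transmits unfolding infectious_at_one_iff by blast
      then show ?thesis using infection_time by blast
    next
      case 2
      then show ?thesis using transmits infection_time by blast
    qed
  qed
  then show "p \<in> (\<lambda>j. (j, Suc (\<tau> j))) ` {1..m} \<union> (\<lambda>j. (j, Suc (\<tau> 0))) ` {1..m} \<union> {\<tau> 0, Suc (\<tau> 0)} \<times> {1..m}"
    using p j v by auto
qed

lemma card_detected_relabelings: "card (detected_relabelings m S) \<le> 4 * m"
proof -
  let ?I = "timetable (star_edges m) Max 1 m S"
  define \<tau> where "\<tau> x = (THE t. (x, t) \<in> ?I)" for x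
  have "t = \<tau> x" if "(x, t) \<in> ?I" for x t
    unfolding \<tau>_def
    by (rule the_equality[symmetric]) (use that infected_upto_time_unique in \<open>auto simp: timetable_def\<close>)
  then have "detected_relabelings m S \<subseteq> (\<lambda>j. (j, Suc (\<tau> j))) ` {1..m} \<union> (\<lambda>j. (j, Suc (\<tau> 0))) ` {1..m}
      \<union> {\<tau> 0, Suc (\<tau> 0)} \<times> {1..m}" (is "_ \<subseteq> ?A \<union> ?B \<union> ?C")
    by (rule detected_relabelings_subset)
  then have "card (detected_relabelings m S) \<le> card (?A \<union> ?B \<union> ?C)"
    by (rule card_mono[rotated]) simp
  also have "\<dots> \<le> card ?A + card ?B + card ?C"
    using card_Un_le[of "?A \<union> ?B" ?C] card_Un_le[of ?A ?B] by linarith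
  also have "\<dots> \<le> m + m + 2 * m"
    using card_image_le[of "{1..m}" "\<lambda>j. (j, Suc (\<tau> j))"] card_image_le[of "{1..m}" "\<lambda>j. (j, Suc (\<tau> 0))"]
      card_cartesian_product[of "{\<tau> 0, Suc (\<tau> 0)}" "{1..m}"] by simp
  finally show ?thesis by simp
qed

lemma star_schedule_length_lower_bound:
  assumes schedule: "witnessing_schedule {0..m} (star_edges m) m 1 k Max Ss"
  shows "m - 1 \<le> 4 * length Ss"
proof -
  let ?P = "{(j, v) \<in> {1..m} \<times> {1..m}. v \<noteq> j}"
  have "?P \<subseteq> (\<Union>S\<in>set Ss. detected_relabelings m S)"
  proof
    fix p assume "p \<in> ?P"
    then obtain j v where p: "p = (j, v)" and j: "j \<in> {1..m}" and v: "v \<in> {1..m}" "v \<noteq> j"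
      by blast
    have "labeling (star_edges m) m (Max({0, j} := v))"
      using v unfolding labeling_def star_edges_def by auto
    moreover have "{0, j} \<in> star_edges m"
      using j unfolding star_edges_def by blast
    moreover have "(Max({0, j} := v)) {0, j} \<noteq> Max {0, j}"
      using v by simp
    ultimately obtain S where "S \<in> set Ss"
      "timetable (star_edges m) (Max({0, j} := v)) 1 m S \<noteq> timetable (star_edges m) Max 1 m S"
      using schedule unfolding witnessing_schedule_def by blast
    then show "p \<in> (\<Union>S\<in>set Ss. detected_relabelings m S)"
      using p j v unfolding detected_relabelings_def by blast
  qed
  have "m * m - m = card ?P"
  proof -
    have "?P = {1..m} \<times> {1..m} - (\<lambda>j. (j, j)) ` {1..m}" by auto
    moreover have "card ((\<lambda>j. (j, j)) ` {1..m}) = m" by (subst card_image) (auto simp: inj_on_def)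
    ultimately show ?thesis by (simp add: card_Diff_subset card_cartesian_product image_subset_iff)
  qed
  also have "\<dots> \<le> card (\<Union>S\<in>set Ss. detected_relabelings m S)"
  proof (intro card_mono finite_UN_I)
    show "finite (detected_relabelings m S)" for S
      unfolding detected_relabelings_def by (rule finite_subset[of _ "{1..m} \<times> {1..m}"]) auto
  qed (use \<open>?P \<subseteq> _\<close> in auto)
  also have "\<dots> \<le> (\<Sum>S\<in>set Ss. card (detected_relabelings m S))"
    by (rule card_UN_le) simp
  also have "\<dots> \<le> card (set Ss) * (4 * m)"
    using sum_bounded_above[of "set Ss" "\<lambda>S. card (detected_relabelings m S)" "4 * m"]
      card_detected_relabelings by simp
  also have "\<dots> \<le> length Ss * (4 * m)"
    by (simp add: card_length)
  finally have "m * (m - 1) \<le> m * (4 * length Ss)"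
    by (simp add: diff_mult_distrib2 algebra_simps)
  then show ?thesis by (cases "m = 0") auto
qed

lemma star_leaf_infected:
  assumes "j \<in> {1..m}"
  shows "(j, j) \<in> timetable (star_edges m) Max 1 m {(0, j - 1)}"
proof -
  have "{j, 0} \<in> star_edges m" "Max {j, 0} = j"
    using assms by (auto simp: star_edges_def insert_commute)
  then have "(j, j) \<in> infected_upto (star_edges m) Max 1 {(0, j - 1)} j"
    using assms infected_upto_singleton_seed_at[of "star_edges m" Max 1 0 "j - 1"]
    by (cases j) auto
  moreover have "infected_upto (star_edges m) Max 1 {(0, j - 1)} j \<subseteq> timetable (star_edges m) Max 1 m {(0, j - 1)}"
    using assms infected_upto_mono[of j m] unfolding timetable_def by simp
  ultimately show ?thesis
    by blast
qed

lemma star_witnessing_schedule: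
  assumes "k \<ge> 1"
  shows "witnessing_schedule {0..m} (star_edges m) m 1 k Max (map (\<lambda>r. {(0, r)}) [0..<m])"
  unfolding witnessing_schedule_def
proof (intro conjI allI impI ballI)
  fix S assume "S \<in> set (map (\<lambda>r. {(0::nat, r)}) [0..<m])"
  then show "valid_seeds {0..m} m k S"
    using assms unfolding valid_seeds_def by auto
next
  fix lam' e
  assume same: "\<forall>S\<in>set (map (\<lambda>r. {(0, r)}) [0..<m]).
      timetable (star_edges m) lam' 1 m S = timetable (star_edges m) Max 1 m S"
    and "e \<in> star_edges m"
  then obtain j where j: "j \<in> {1..m}" and e: "e = {0, j}"
    unfolding star_edges_def by blast
  then have "(j, j) \<in> infected_upto (star_edges m) lam' 1 {(0, j - 1)} m"
    using same star_leaf_infected[OF j] unfolding timetable_def by force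
  then obtain w where "{j, w} \<in> star_edges m" "lam' {j, w} = j"
    using j infected_upto_cause by fastforce
  then have "lam' {0, j} = j"
    using j by (auto simp: star_edges_def doubleton_eq_iff insert_commute)
  then show "lam' e = Max e"
    using e by simp
qed

lemma star_witness_complexity_lower_bound:
  assumes "k \<ge> 1"
  shows "m - 1 \<le> 4 * witness_complexity {0..m} (star_edges m) m 1 k Max"
proof -
  obtain Ss where "length Ss = witness_complexity {0..m} (star_edges m) m 1 k Max"
    and "witnessing_schedule {0..m} (star_edges m) m 1 k Max Ss"
    using witness_complexity_attained[OF star_witnessing_schedule[OF assms]] .
  then show ?thesis
    using star_schedule_length_lower_bound by metis
qed

theorem mainTheorem18:
  "\<exists>(V :: nat \<Rightarrow> nat set) (E :: nat \<Rightarrow> nat set set) (Tmax :: nat \<Rightarrow> nat) (\<delta> :: nat \<Rightarrow> nat)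
      (lam :: nat \<Rightarrow> nat set \<Rightarrow> nat).
     (\<forall>n. temporal_graph (V n) (E n) (Tmax n) (lam n)) \<and>
     strict_mono (\<lambda>n. card (E n)) \<and>
     (\<exists>c :: real. c > 0 \<and> (\<forall>k :: nat. k \<ge> 1 \<longrightarrow> (\<exists>N. \<forall>n \<ge> N.
        (\<exists>Ss. witnessing_schedule (V n) (E n) (Tmax n) (\<delta> n) k (lam n) Ss) \<and>
        real (witness_complexity (V n) (E n) (Tmax n) (\<delta> n) k (lam n)) \<ge> c * real (card (E n)))))"
proof (rule exI[of _ "\<lambda>n. {0..n}"], rule exI[of _ star_edges], rule exI[of _ "\<lambda>n. n"],
    rule exI[of _ "\<lambda>_. 1"], rule exI[of _ "\<lambda>_. Max"], intro conjI allI impI exI[of _ "1 / 8"] exI[of _ 2])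
  show "temporal_graph {0..n} (star_edges n) n Max" for n
    by (rule temporal_graph_star)
  show "strict_mono (\<lambda>n. card (star_edges n))"
    by (simp add: card_star_edges strict_mono_def)
  fix k n :: nat assume "k \<ge> 1" "n \<ge> 2"
  show "\<exists>Ss. witnessing_schedule {0..n} (star_edges n) n 1 k Max Ss"
    using star_witnessing_schedule[OF \<open>k \<ge> 1\<close>] by blast
  show "1 / 8 * real (card (star_edges n)) \<le> real (witness_complexity {0..n} (star_edges n) n 1 k Max)"
    using star_witness_complexity_lower_bound[OF \<open>k \<ge> 1\<close>, of n] \<open>n \<ge> 2\<close>
    by (simp add: card_star_edges)
qed simp

end
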